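(* Let $P\ge4$, $S\ge2$, $\varepsilon\ge0$, and let $R$ be a positive integer. Suppose that for every prime $p\in(P/2,P]$, $S_p$ is a multiset of integers in $(-p/2,p/2)$ with $|S_p|=S$ and $|f_{S_p}|\le\varepsilon$ (computed modulo $p$). Suppose $q$ is a prime with $q>P$. Then the multiset $$T=\{r+s^{(p)}(p^{-1})_q:\ 1\le r\le R,\ p \text{ prime},\ P/2<p\le P,\ s^{(p)}\in S_p\}$$ of residues modulo $q$ satisfies $$|f_T|\le\varepsilon+\frac{2/\sqrt3}{R}+\frac{\log(q/3)}{V\log(P/2)},$$ where $V$ is the number of primes in $(P/2,P]$.
   Context: $(a^{-1})_q$ denotes the inverse of $a$ modulo $q$. For a multiset $S$ of residues modulo $N$, $f_S(k)=\sum_{s\in S}e^{2\pi iks/N}$ (with multiplicity) and $|f_S|=\frac1{|S|}\max_{1\le k\le N-1}|f_S(k)|$. *)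

theory Defs
  imports "HOL-Analysis.Analysis" "HOL-Library.Multiset" "HOL-Number_Theory.Number_Theory"
begin

definition expsum :: "int \<Rightarrow> int multiset \<Rightarrow> int \<Rightarrow> complex" where
  "expsum N S k = sum_mset (image_mset (\<lambda>s. cis (2 * pi * of_int k * of_int s / of_int N)) S)"

definition normf :: "int \<Rightarrow> int multiset \<Rightarrow> real" where
  "normf N S = Max ((\<lambda>k. cmod (expsum N S k)) ` {1..N-1}) / real (size S)"

definition primes_in :: "real \<Rightarrow> int set" where
  "primes_in P = {p::int. prime p \<and> P / 2 < of_int p \<and> of_int p \<le> P}"

end

theory Submission
  imports Defs
begin

(*
  For a frequency k, the exponential sum of T factors as G(k) * H(k), where
  G(k) = sum_{r=1..R} e(kr/q) is a geometric sum and H(k) = sum_p f_{S_p}(k (p^-1)_q).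
  If k/q lies in [1/3, 2/3] modulo 1, then |G(k)| <= 1/|sin(pi k/q)| <= 2/sqrt 3 and H is
  bounded trivially. Otherwise k has a representative with |k| < q/3. Writing
  p k (p^-1)_q = k + q m, the phase k s (p^-1)_q / q differs from m s / p by s k/(pq), so each
  prime p not dividing k contributes at most |f_{S_p}(m)| + 2 S sin(pi |k| / 2q), and this
  error is absorbed by |G(k)| <= 1/|sin(pi k/q)|. The primes above P/2 dividing k number
  at most log(q/3)/log(P/2).
*)

lemma cis_frequency_cong:
  fixes N a a' b :: int
  assumes "[a = a'] (mod N)"
  shows "cis (2 * pi * of_int a * of_int b / of_int N) = cis (2 * pi * of_int a' * of_int b / of_int N)"
proof (cases "N = 0")
  case True
  with assms show ?thesis by (simp add: cong_def)
next
  case False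
  obtain t where "a = a' + N * t" using assms by (metis cong_iff_lin cong_sym)
  then have "2 * pi * of_int a * of_int b / of_int N
      = 2 * pi * of_int a' * of_int b / of_int N + 2 * pi * of_int (t * b)"
    using False by (simp add: field_simps)
  then show ?thesis by (simp add: cis_mult[symmetric])
qed

lemma norm_cis_minus_1: "cmod (cis a - 1) = 2 * \<bar>sin (a / 2)\<bar>"
proof -
  define b where "b = a / 2"
  have a: "a = 2 * b" by (simp add: b_def)
  have "cis a - 1 = cis b * (2 * \<i> * sin b)"
    by (simp add: a complex_eq_iff cos_double_sin sin_double power2_eq_square)
  then show ?thesis by (simp add: norm_mult b_def)
qed

lemma norm_cis_diff: "cmod (cis a - cis b) = 2 * \<bar>sin ((a - b) / 2)\<bar>"
proof -
  have "cis a - cis b = cis b * (cis (a - b) - 1)" by (simp add: cis_mult algebra_simps)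
  then show ?thesis by (simp add: norm_mult norm_cis_minus_1)
qed

lemma abs_sin_le_sin:
  assumes "\<bar>z\<bar> \<le> c" "c \<le> pi / 2"
  shows "\<bar>sin z\<bar> \<le> sin c"
proof -
  have "sin \<bar>z\<bar> \<le> sin c" using assms by (intro sin_monotone_2pi_le) auto
  moreover have "\<bar>sin z\<bar> = \<bar>sin \<bar>z\<bar>\<bar>" by (cases "z \<ge> 0") simp_all
  moreover have "0 \<le> sin \<bar>z\<bar>" using assms by (intro sin_ge_zero) auto
  ultimately show ?thesis by simp
qed

lemma sqrt3_half_le_sin:
  assumes "pi / 3 \<le> x" "x \<le> 2 * pi / 3"
  shows "sqrt 3 / 2 \<le> sin x"
proof (cases "x \<le> pi / 2")
  case True
  then have "sin (pi / 3) \<le> sin x" using assms by (intro sin_monotone_2pi_le) auto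
  then show ?thesis by (simp add: sin_60)
next
  case False
  then have "sin (pi / 3) \<le> sin (pi - x)" using assms by (intro sin_monotone_2pi_le) auto
  then show ?thesis by (simp add: sin_60)
qed

lemma cis_sum_geometric:
  "(cis a - 1) * (\<Sum>r\<in>{1..int n}. cis (of_int r * a)) = cis ((of_nat n + 1) * a) - cis a"
proof (induction n)
  case (Suc n)
  have "{1..int (Suc n)} = insert (int n + 1) {1..int n}" by auto
  then have "(cis a - 1) * (\<Sum>r\<in>{1..int (Suc n)}. cis (of_int r * a))
      = (cis a - 1) * cis ((of_nat n + 1) * a) + (cis a - 1) * (\<Sum>r\<in>{1..int n}. cis (of_int r * a))"
    by (simp add: distrib_left)
  also have "\<dots> = cis (a + (of_nat n + 1) * a) - cis a"
    using Suc by (simp add: algebra_simps cis_mult)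
  finally show ?case by (simp add: algebra_simps)
qed simp

lemma norm_cis_sum_le:
  assumes "R \<ge> 0"
  shows "cmod (\<Sum>r\<in>{1..R}. cis (of_int r * a)) \<le> of_int R"
  using norm_sum[of "\<lambda>r. cis (of_int r * a)" "{1..R}"] assms by simp

lemma norm_cis_sum_mult_sin_le:
  assumes "R \<ge> 0"
  shows "cmod (\<Sum>r\<in>{1..R}. cis (of_int r * a)) * \<bar>sin (a / 2)\<bar> \<le> 1"
proof -
  obtain n where n: "R = int n" using assms nonneg_int_cases by blast
  have "2 * \<bar>sin (a / 2)\<bar> * cmod (\<Sum>r\<in>{1..R}. cis (of_int r * a))
      = cmod (cis ((of_nat n + 1) * a) - cis a)"
    using cis_sum_geometric[of a n] by (metis n norm_mult norm_cis_minus_1)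
  also have "\<dots> \<le> 2" using norm_triangle_ineq4[of "cis ((of_nat n + 1) * a)" "cis a"] by simp
  finally show ?thesis by (simp add: mult_ac)
qed

lemma norm_cis_sum_le_middle:
  assumes "R \<ge> 0" "2 * pi / 3 \<le> a" "a \<le> 4 * pi / 3"
  shows "cmod (\<Sum>r\<in>{1..R}. cis (of_int r * a)) \<le> 2 / sqrt 3"
proof -
  have "sqrt 3 / 2 \<le> \<bar>sin (a / 2)\<bar>"
    using sqrt3_half_le_sin[of "a / 2"] assms by linarith
  then have "cmod (\<Sum>r\<in>{1..R}. cis (of_int r * a)) * (sqrt 3 / 2) \<le> 1"
    using norm_cis_sum_mult_sin_le[OF assms(1), of a] by (smt (verit) mult_left_mono norm_ge_zero)
  then show ?thesis by (simp add: field_simps)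
qed

lemma norm_cis_sum_mult_sin_le_low:
  assumes "R \<ge> 0" "\<bar>a\<bar> \<le> 2 * pi / 3"
  shows "cmod (\<Sum>r\<in>{1..R}. cis (of_int r * a)) * (2 * sin (\<bar>a\<bar> / 4)) \<le> 2 / sqrt 3"
proof -
  define x where "x = \<bar>a\<bar> / 4"
  have x: "0 \<le> x" "x \<le> pi / 6" using assms(2) by (auto simp: x_def)
  have "\<bar>sin (a / 2)\<bar> = \<bar>sin (2 * x)\<bar>"
    by (cases "a \<ge> 0") (simp_all add: x_def)
  also have "\<dots> = sin (2 * x)" using x by (simp add: sin_ge_zero)
  also have "\<dots> = 2 * sin x * cos x" by (rule sin_double)
  finally have "cmod (\<Sum>r\<in>{1..R}. cis (of_int r * a)) * (2 * sin x) * cos x \<le> 1"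
    using norm_cis_sum_mult_sin_le[OF assms(1), of a] by (simp add: mult_ac)
  moreover have "sqrt 3 / 2 \<le> cos x"
    using cos_monotone_0_pi_le[of x "pi / 6"] x by (simp add: cos_30)
  moreover have "0 \<le> sin x" using x by (intro sin_ge_zero) auto
  ultimately have "cmod (\<Sum>r\<in>{1..R}. cis (of_int r * a)) * (2 * sin x) * (sqrt 3 / 2) \<le> 1"
    by (smt (verit) mult_left_mono mult_nonneg_nonneg norm_ge_zero)
  then show ?thesis by (simp add: x_def field_simps)
qed

lemma norm_sum_mset_le:
  assumes "\<And>x. x \<in># A \<Longrightarrow> norm (f x) \<le> c"
  shows "norm (\<Sum>x\<in>#A. f x :: 'a :: real_normed_vector) \<le> real (size A) * c"
  using assms
proof (induction A)
  case (add x A)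
  have "norm (\<Sum>y\<in>#add_mset x A. f y) \<le> norm (f x) + norm (\<Sum>y\<in>#A. f y)"
    by (simp add: norm_triangle_ineq)
  also have "\<dots> \<le> c + real (size A) * c" using add by (intro add_mono) auto
  finally show ?case by (simp add: algebra_simps)
qed simp

lemma expsum_cong:
  assumes "[k = k'] (mod N)"
  shows "expsum N A k = expsum N A k'"
  unfolding expsum_def using cis_frequency_cong[OF assms] by simp

lemma expsum_sum: "expsum N (\<Sum>x\<in>X. F x) k = (\<Sum>x\<in>X. expsum N (F x) k)"
  by (induction X rule: infinite_finite_induct) (auto simp: expsum_def)

lemma norm_expsum_le: "cmod (expsum N A k) \<le> real (size A)"
  unfolding expsum_def
  using norm_sum_mset_le[of A "\<lambda>s. cis (2 * pi * of_int k * of_int s / of_int N)" 1] by simp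

lemma norm_expsum_le_normf:
  assumes "N > 0" "\<not> N dvd k"
  shows "cmod (expsum N A k) \<le> normf N A * real (size A)"
proof (cases "A = {#}")
  case False
  have "k mod N \<noteq> 0" "0 \<le> k mod N" "k mod N < N"
    using assms by (auto simp: dvd_eq_mod_eq_0)
  then have "k mod N \<in> {1..N - 1}" by simp
  then have "cmod (expsum N A (k mod N)) \<le> Max ((\<lambda>k. cmod (expsum N A k)) ` {1..N - 1})"
    by (intro Max_ge) auto
  then show ?thesis using False expsum_cong[of "k mod N" k N A] by (simp add: normf_def cong_def)
qed (simp add: expsum_def)

lemma normf_le:
  assumes "N \<ge> 2" "B \<ge> 0" "\<And>k. k \<in> {1..N - 1} \<Longrightarrow> cmod (expsum N A k) \<le> B * real (size A)"
  shows "normf N A \<le> B"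
proof (cases "A = {#}")
  case False
  then show ?thesis using assms unfolding normf_def by (simp add: divide_le_eq Max.boundedI)
qed (simp add: normf_def assms)

lemma expsum_translate_mod:
  "expsum N (image_mset (\<lambda>s. (r + s) mod N) A) k
     = cis (of_int r * (2 * pi * of_int k / of_int N)) * expsum N A k"
proof -
  have "cis (2 * pi * of_int k * of_int ((r + s) mod N) / of_int N)
      = cis (of_int r * (2 * pi * of_int k / of_int N)) * cis (2 * pi * of_int k * of_int s / of_int N)" for s
  proof -
    have "cis (2 * pi * of_int ((r + s) mod N) * of_int k / of_int N)
        = cis (2 * pi * of_int (r + s) * of_int k / of_int N)"
      by (rule cis_frequency_cong) (simp add: cong_def)
    then show ?thesis by (simp add: cis_mult algebra_simps add_divide_distrib)
  qed
  then show ?thesis by (simp add: expsum_def multiset.map_comp comp_def sum_mset_distrib_left)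
qed

lemma expsum_sum_translates:
  "expsum N (\<Sum>p\<in>X. \<Sum>r\<in>{1..R}. image_mset (\<lambda>s. (r + g p s) mod N) (A p)) k
     = (\<Sum>r\<in>{1..R}. cis (of_int r * (2 * pi * of_int k / of_int N)))
       * (\<Sum>p\<in>X. expsum N (image_mset (g p) (A p)) k)"
proof -
  have "image_mset (\<lambda>s. (r + g p s) mod N) (A p)
      = image_mset (\<lambda>s. (r + s) mod N) (image_mset (g p) (A p))" for r p
    by (simp add: multiset.map_comp comp_def)
  then show ?thesis by (simp add: expsum_sum expsum_translate_mod sum_distrib_left sum_distrib_right)
qed

lemma norm_cis_dilate_diff_le:
  fixes p q k u m s :: int
  assumes "p > 0" "q > 0" "p * k * u = k + q * m" "2 * \<bar>s\<bar> < p" "\<bar>k\<bar> \<le> q"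
  shows "cmod (cis (2 * pi * of_int k * of_int (s * u) / of_int q) - cis (2 * pi * of_int m * of_int s / of_int p))
     \<le> 2 * sin (pi * \<bar>of_int k\<bar> / (2 * of_int q))"
proof -
  have pku: "real_of_int p * of_int k * of_int u = of_int k + of_int q * of_int m"
    using arg_cong[OF assms(3), of real_of_int] by simp
  have "2 * pi * of_int k * of_int (s * u) / of_int q
      = 2 * pi * of_int s * (real_of_int p * of_int k * of_int u) / (of_int p * of_int q)"
    using assms(1,2) by (simp add: field_simps)
  also have "\<dots> = 2 * pi * of_int m * of_int s / of_int p
      + 2 * (pi * of_int s * of_int k / (of_int p * of_int q))"
    unfolding pku using assms(1,2) by (simp add: field_simps)
  finally have angle: "(2 * pi * of_int k * of_int (s * u) / of_int q
      - 2 * pi * of_int m * of_int s / of_int p) / 2 = pi * of_int s * of_int k / (of_int p * of_int q)" by simp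
  have "\<bar>pi * of_int s * of_int k / (of_int p * of_int q)\<bar>
      = (pi * \<bar>of_int k\<bar> / (of_int p * of_int q)) * \<bar>of_int s\<bar>"
    using assms(1,2) by (simp add: abs_mult)
  also have "\<dots> \<le> (pi * \<bar>of_int k\<bar> / (of_int p * of_int q)) * (of_int p / 2)"
    using assms(1,2,4) by (intro mult_left_mono) auto
  also have "\<dots> = pi * \<bar>of_int k\<bar> / (2 * of_int q)" using assms(1) by simp
  finally have "\<bar>pi * of_int s * of_int k / (of_int p * of_int q)\<bar> \<le> pi * \<bar>of_int k\<bar> / (2 * of_int q)" .
  moreover have "pi * \<bar>of_int k\<bar> / (2 * of_int q) \<le> pi / 2"
    using assms(2,5) by (simp add: divide_le_eq)
  ultimately show ?thesis unfolding norm_cis_diff angle by (simp add: abs_sin_le_sin)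
qed

lemma norm_expsum_dilate_le:
  fixes p q k :: int
  assumes "p > 0" "q > 0" "coprime p q" "\<not> p dvd k" "\<bar>k\<bar> \<le> q" "\<And>s. s \<in># A \<Longrightarrow> 2 * \<bar>s\<bar> < p"
  shows "cmod (expsum q (image_mset (\<lambda>s. s * modular_inverse q p) A) k)
     \<le> normf p A * real (size A) + real (size A) * (2 * sin (pi * \<bar>of_int k\<bar> / (2 * of_int q)))"
proof -
  define u where "u = modular_inverse q p"
  obtain w where "p * u = 1 + q * w"
    using cong_modular_inverse1[OF assms(3)] unfolding u_def by (metis cong_iff_lin cong_sym)
  then have pku: "p * k * u = k + q * (k * w)" by (simp add: algebra_simps)
  have "\<not> p dvd k * w"
  proof
    assume "p dvd k * w"
    then have "p dvd p * k * u - q * (k * w)" by simp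
    with pku assms(4) show False by simp
  qed
  then have "cmod (expsum p A (k * w)) \<le> normf p A * real (size A)"
    using assms(1) by (rule norm_expsum_le_normf[rotated])
  moreover have "cmod (expsum q (image_mset (\<lambda>s. s * u) A) k - expsum p A (k * w))
      \<le> real (size A) * (2 * sin (pi * \<bar>of_int k\<bar> / (2 * of_int q)))"
  proof -
    have diff: "expsum q (image_mset (\<lambda>s. s * u) A) k - expsum p A (k * w)
        = (\<Sum>s\<in>#A. cis (2 * pi * of_int k * of_int (s * u) / of_int q)
                    - cis (2 * pi * of_int (k * w) * of_int s / of_int p))"
      by (induction A) (simp_all add: expsum_def)
    show ?thesis
      unfolding diff by (intro norm_sum_mset_le norm_cis_dilate_diff_le[OF assms(1,2) pku _ assms(5)] assms(6))
  qed
  ultimately show ?thesis unfolding u_def using norm_triangle_ineq2 by (smt (verit))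
qed

lemma prod_primes_dvd:
  fixes D :: "int set"
  assumes "finite D" "\<And>p. p \<in> D \<Longrightarrow> prime p \<and> p dvd n" "n \<noteq> 0"
  shows "\<Prod>D dvd n"
proof -
  have "D \<subseteq> prime_factors n" using assms by (auto simp: prime_factors_dvd)
  then have "mset_set D \<subseteq># prime_factorization n"
    by (meson assms(1) mset_set_set_mset_msubset msubset_mset_set_iff subset_mset.order_trans finite_set_mset)
  then have "prod_mset (mset_set D) dvd prod_mset (prime_factorization n)" by (rule prod_mset_subset_imp_dvd)
  then show ?thesis using assms by (simp add: prod_unfold_prod_mset prod_mset_prime_factorization)
qed

lemma card_prime_divisors_above_le:
  fixes D :: "int set" and b :: real
  assumes "finite D" "\<And>p. p \<in> D \<Longrightarrow> prime p \<and> p dvd n \<and> b < of_int p" "n \<noteq> 0" "1 < b"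
  shows "real (card D) \<le> ln \<bar>of_int n\<bar> / ln b"
proof -
  have "b ^ card D = (\<Prod>p\<in>D. b)" by simp
  also have "\<dots> \<le> (\<Prod>p\<in>D. real_of_int p)"
    using assms(2,4) by (intro prod_mono) (auto intro: less_imp_le)
  also have "\<dots> = of_int (\<Prod>D)" by simp
  also have "\<dots> \<le> \<bar>of_int n\<bar>"
  proof -
    have "\<Prod>D dvd n" using assms(1-3) by (intro prod_primes_dvd) auto
    then have "\<Prod>D \<le> \<bar>n\<bar>" using dvd_imp_le_int[OF assms(3)] by fastforce
    then show ?thesis by (metis of_int_abs of_int_le_iff)
  qed
  finally have "ln (b ^ card D) \<le> ln \<bar>of_int n\<bar>" using assms(4) by (intro ln_mono) auto
  then show ?thesis using assms(4) by (simp add: ln_realpow le_divide_eq)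
qed

context
  fixes q R :: int and X :: "int set" and A :: "int \<Rightarrow> int multiset" and S :: nat and b \<epsilon> :: real
  assumes finite_X: "finite X" and prime_q: "prime q" and b_gt_1: "1 < b"
    and R_pos: "R > 0" and \<epsilon>_nonneg: "\<epsilon> \<ge> 0"
    and primes_X: "\<And>p. p \<in> X \<Longrightarrow> prime p \<and> b < of_int p \<and> p < q"
    and size_A: "\<And>p. p \<in> X \<Longrightarrow> size (A p) = S"
    and small_A: "\<And>p s. p \<in> X \<Longrightarrow> s \<in># A p \<Longrightarrow> 2 * \<bar>s\<bar> < p"
    and normf_A: "\<And>p. p \<in> X \<Longrightarrow> normf p (A p) \<le> \<epsilon>"
begin

abbreviation dilates_expsum :: "int \<Rightarrow> complex" where
  "dilates_expsum k \<equiv> \<Sum>p\<in>X. expsum q (image_mset (\<lambda>s. s * modular_inverse q p) (A p)) k"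

abbreviation translates :: "int multiset" where
  "translates \<equiv> \<Sum>p\<in>X. \<Sum>r\<in>{1..R}. image_mset (\<lambda>s. (r + s * modular_inverse q p) mod q) (A p)"

lemma norm_dilates_expsum_le: "cmod (dilates_expsum k) \<le> real (card X) * real S"
proof -
  have "cmod (dilates_expsum k)
      \<le> (\<Sum>p\<in>X. cmod (expsum q (image_mset (\<lambda>s. s * modular_inverse q p) (A p)) k))"
    by (rule norm_sum)
  also have "\<dots> \<le> (\<Sum>p\<in>X. real S)"
    using norm_expsum_le size_A by (intro sum_mono) (metis size_image_mset)
  finally show ?thesis by simp
qed

lemma norm_dilates_expsum_le_divisors:
  assumes "\<bar>k\<bar> \<le> q"
  shows "cmod (dilates_expsum k) \<le> real S * real (card {p\<in>X. p dvd k})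
     + real (card X) * real S * (\<epsilon> + 2 * sin (pi * \<bar>of_int k\<bar> / (2 * of_int q)))"
proof -
  define \<sigma> where "\<sigma> = 2 * sin (pi * \<bar>of_int k\<bar> / (2 * of_int q))"
  have q: "q > 0" using prime_q prime_gt_0_int by blast
  have "\<sigma> \<ge> 0" unfolding \<sigma>_def using q assms by (auto intro!: sin_ge_zero simp: divide_le_eq)
  have bound_p: "cmod (expsum q (image_mset (\<lambda>s. s * modular_inverse q p) (A p)) k)
      \<le> (if p dvd k then real S else 0) + real S * (\<epsilon> + \<sigma>)" if p: "p \<in> X" for p
  proof (cases "p dvd k")
    case True
    have "real S * (\<epsilon> + \<sigma>) \<ge> 0" using \<open>\<sigma> \<ge> 0\<close> \<epsilon>_nonneg by simp
    then show ?thesis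
      using True norm_expsum_le[of q "image_mset (\<lambda>s. s * modular_inverse q p) (A p)" k] size_A[OF p]
      by simp
  next
    case False
    have "coprime p q" using primes_X[OF p] prime_q by (intro primes_coprime) auto
    then have "cmod (expsum q (image_mset (\<lambda>s. s * modular_inverse q p) (A p)) k)
        \<le> normf p (A p) * real S + real S * \<sigma>"
      using norm_expsum_dilate_le[of p q k "A p"] primes_X[OF p] False assms q small_A[OF p] size_A[OF p]
      by (simp add: \<sigma>_def prime_gt_0_int)
    also have "\<dots> \<le> \<epsilon> * real S + real S * \<sigma>" using normf_A[OF p] by (simp add: mult_right_mono)
    finally show ?thesis using False by (simp add: algebra_simps)
  qed
  have "cmod (dilates_expsum k)
      \<le> (\<Sum>p\<in>X. cmod (expsum q (image_mset (\<lambda>s. s * modular_inverse q p) (A p)) k))"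
    by (rule norm_sum)
  also have "\<dots> \<le> (\<Sum>p\<in>X. (if p dvd k then real S else 0) + real S * (\<epsilon> + \<sigma>))"
    using bound_p by (rule sum_mono)
  also have "\<dots> = real S * real (card {p\<in>X. p dvd k}) + real (card X) * real S * (\<epsilon> + \<sigma>)"
    using finite_X by (simp add: sum.distrib sum.inter_filter[symmetric])
  finally show ?thesis unfolding \<sigma>_def .
qed

lemma expsum_translates:
  "expsum q translates k
     = (\<Sum>r\<in>{1..R}. cis (of_int r * (2 * pi * of_int k / of_int q))) * dilates_expsum k"
  by (rule expsum_sum_translates[where g = "\<lambda>p s. s * modular_inverse q p"])

lemma norm_expsum_translates_middle:
  assumes "q \<le> 3 * k" "3 * k \<le> 2 * q"
  shows "cmod (expsum q translates k) \<le> real (card X) * real S * (2 / sqrt 3)"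
proof -
  have q: "real_of_int q > 0" using prime_q prime_gt_0_int by simp
  have "real_of_int q \<le> 3 * of_int k" "3 * real_of_int k \<le> 2 * of_int q"
    using assms by linarith+
  then have "cmod (\<Sum>r\<in>{1..R}. cis (of_int r * (2 * pi * of_int k / of_int q))) \<le> 2 / sqrt 3"
    using R_pos q by (intro norm_cis_sum_le_middle) (simp_all add: field_simps)
  then show ?thesis
    unfolding expsum_translates norm_mult using norm_dilates_expsum_le
    by (subst mult.commute, intro mult_mono) auto
qed

lemma norm_expsum_translates_low:
  assumes "k \<noteq> 0" "3 * \<bar>k\<bar> < q"
  shows "cmod (expsum q translates k)
     \<le> real (card X) * real S * (of_int R * \<epsilon> + 2 / sqrt 3) + of_int R * real S * (ln (of_int q / 3) / ln b)"
proof -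
  define G where "G = (\<Sum>r\<in>{1..R}. cis (of_int r * (2 * pi * of_int k / of_int q)))"
  define \<sigma> where "\<sigma> = 2 * sin (pi * \<bar>of_int k\<bar> / (2 * of_int q))"
  define c where "c = real (card {p\<in>X. p dvd k})"
  have q: "real_of_int q > 0" using prime_q prime_gt_0_int by simp
  have k: "3 * \<bar>real_of_int k\<bar> < of_int q" using assms(2) by linarith
  have G_le: "cmod G \<le> of_int R" unfolding G_def using R_pos by (intro norm_cis_sum_le) simp
  have "\<bar>2 * pi * of_int k / of_int q\<bar> = 2 * pi * (\<bar>of_int k\<bar> / of_int q)"
    using q by (simp add: abs_mult)
  also have "\<dots> \<le> 2 * pi * (1 / 3)"
    using k q by (intro mult_left_mono) (simp_all add: field_simps)
  finally have "cmod G * (2 * sin (\<bar>2 * pi * of_int k / of_int q\<bar> / 4)) \<le> 2 / sqrt 3"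
    unfolding G_def using R_pos by (intro norm_cis_sum_mult_sin_le_low) simp_all
  then have G_\<sigma>: "cmod G * \<sigma> \<le> 2 / sqrt 3" using q by (simp add: \<sigma>_def abs_mult)
  have "c \<le> ln \<bar>of_int k\<bar> / ln b"
    unfolding c_def using finite_X primes_X assms(1) b_gt_1 by (intro card_prime_divisors_above_le) auto
  also have "\<dots> \<le> ln (of_int q / 3) / ln b"
    using k assms(1) b_gt_1 by (intro divide_right_mono ln_mono) auto
  finally have c: "c \<le> ln (of_int q / 3) / ln b" .
  have "cmod (expsum q translates k) = cmod G * cmod (dilates_expsum k)"
    by (simp add: expsum_translates G_def norm_mult)
  also have "\<dots> \<le> cmod G * (real S * c + real (card X) * real S * (\<epsilon> + \<sigma>))"
    using norm_dilates_expsum_le_divisors[of k] assms(2)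
    by (intro mult_left_mono) (simp_all add: c_def \<sigma>_def)
  also have "\<dots> = (cmod G * c) * real S + (cmod G * \<epsilon>) * (real (card X) * real S)
      + (cmod G * \<sigma>) * (real (card X) * real S)"
    by (simp add: algebra_simps)
  also have "\<dots> \<le> (of_int R * (ln (of_int q / 3) / ln b)) * real S
      + (of_int R * \<epsilon>) * (real (card X) * real S) + 2 / sqrt 3 * (real (card X) * real S)"
    using G_le G_\<sigma> c \<epsilon>_nonneg R_pos
    by (intro add_mono mult_right_mono mult_mono) (auto simp: c_def)
  finally show ?thesis by (simp add: algebra_simps)
qed

lemma normf_translates_le:
  "normf q translates \<le> \<epsilon> + (2 / sqrt 3) / of_int R + ln (of_int q / 3) / (real (card X) * ln b)"
proof (cases "X = {}")
  case True
  \<comment> \<open>then the multiset is empty and both sides degenerate through x / 0 = 0\<close>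
  then show ?thesis using \<epsilon>_nonneg R_pos by (simp add: normf_def)
next
  case False
  define B where "B = \<epsilon> + (2 / sqrt 3) / of_int R + ln (of_int q / 3) / (real (card X) * ln b)"
  obtain p where p: "p \<in> X" using False by blast
  then have "3 \<le> q" using primes_X[OF p] b_gt_1 by linarith
  then have ln_nonneg: "ln (real_of_int q / 3) \<ge> 0" by simp
  have "real (card X) > 0" using False finite_X by (simp add: card_gt_0_iff)
  then have B_size: "B * real (size translates)
      = real (card X) * real S * (of_int R * \<epsilon> + 2 / sqrt 3) + of_int R * real S * (ln (of_int q / 3) / ln b)"
    using size_A R_pos b_gt_1 by (simp add: B_def field_simps)
  have "cmod (expsum q translates k) \<le> B * real (size translates)" if k: "k \<in> {1..q - 1}" for k
  proof (cases "q \<le> 3 * k \<and> 3 * k \<le> 2 * q")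
    case True
    have "0 \<le> real (card X) * real S * (of_int R * \<epsilon>) + of_int R * real S * (ln (of_int q / 3) / ln b)"
      using R_pos \<epsilon>_nonneg ln_nonneg b_gt_1 by simp
    moreover have "cmod (expsum q translates k) \<le> real (card X) * real S * (2 / sqrt 3)"
      using True by (intro norm_expsum_translates_middle) auto
    ultimately show ?thesis unfolding B_size distrib_left by linarith
  next
    case False
    define k' where "k' = (if 3 * k < q then k else k - q)"
    have k': "[k = k'] (mod q)" "k' \<noteq> 0" "3 * \<bar>k'\<bar> < q"
      using False k by (auto simp: k'_def cong_def)
    have "cmod (expsum q translates k) = cmod (expsum q translates k')"
      using expsum_cong[OF k'(1)] by simp
    also have "\<dots> \<le> B * real (size translates)"
      unfolding B_size using k' by (intro norm_expsum_translates_low)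
    finally show ?thesis .
  qed
  moreover have "B \<ge> 0" unfolding B_def using \<epsilon>_nonneg R_pos ln_nonneg b_gt_1 by simp
  ultimately show ?thesis unfolding B_def using \<open>3 \<le> q\<close> by (intro normf_le) auto
qed

end

theorem lemma12:
  fixes P \<epsilon> :: real and S :: nat and R q :: int and Sp :: "int \<Rightarrow> int multiset"
  assumes "P \<ge> 4" and "S \<ge> 2" and "\<epsilon> \<ge> 0" and "R > 0"
    and "\<And>p. p \<in> primes_in P \<Longrightarrow> size (Sp p) = S"
    and "\<And>p s. p \<in> primes_in P \<Longrightarrow> s \<in># Sp p \<Longrightarrow> - (of_int p / 2) < real_of_int s \<and> real_of_int s < of_int p / 2"
    and "\<And>p. p \<in> primes_in P \<Longrightarrow> normf p (Sp p) \<le> \<epsilon>"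
    and "prime q" and "of_int q > P"
  shows "normf q (\<Sum>p\<in>primes_in P. \<Sum>r\<in>{1..R}.
            image_mset (\<lambda>s. (r + s * modular_inverse q p) mod q) (Sp p))
         \<le> \<epsilon> + (2 / sqrt 3) / of_int R
           + ln (of_int q / 3) / (real (card (primes_in P)) * ln (P / 2))"
proof (rule normf_translates_le)
  have "primes_in P \<subseteq> {0..\<lfloor>P\<rfloor>}"
    unfolding primes_in_def using prime_gt_0_int by (auto simp: le_floor_iff less_imp_le)
  then show "finite (primes_in P)" by (rule finite_subset) simp
  show "p \<in> primes_in P \<Longrightarrow> prime p \<and> P / 2 < of_int p \<and> p < q" for p
    using assms(9) by (auto simp: primes_in_def)
  show "p \<in> primes_in P \<Longrightarrow> s \<in># Sp p \<Longrightarrow> 2 * \<bar>s\<bar> < p" for p s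
    using assms(6)[of p s] by linarith
qed (use assms in auto)

end
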